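(* Let $0<\alpha<1$ and $\sigma=1-\alpha/2$. For every integer $s\ge1$, $$\frac12<\varkappa_s<\frac{1}{2-\alpha},\qquad\text{where}\quad \varkappa_s=\frac{(s+\sigma)^{2-\alpha}-(s-1+\sigma)^{2-\alpha}-(2-\alpha)(s-1+\sigma)^{1-\alpha}}{(2-\alpha)\big((s+\sigma)^{1-\alpha}-(s-1+\sigma)^{1-\alpha}\big)}.$$ *)

theory Defs
  imports Complex_Main
begin

definition kappa :: "real \<Rightarrow> nat \<Rightarrow> real" where
  "kappa \<alpha> s = (let \<sigma> = 1 - \<alpha> / 2 in
     ((real s + \<sigma>) powr (2 - \<alpha>) - (real s - 1 + \<sigma>) powr (2 - \<alpha>)
       - (2 - \<alpha>) * (real s - 1 + \<sigma>) powr (1 - \<alpha>))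
     / ((2 - \<alpha>) * ((real s + \<sigma>) powr (1 - \<alpha>) - (real s - 1 + \<sigma>) powr (1 - \<alpha>))))"

end

theory Submission
  imports Defs
begin

text \<open>With \<open>g = 1 - \<alpha>\<close> and \<open>a = s - \<alpha>/2 > 0\<close>, \<open>\<kappa>\<^sub>s\<close> is the ratio
  \<open>((a+1)^(g+1) - a^(g+1) - (g+1) a^g) / ((g+1) ((a+1)^g - a^g))\<close>.
  The lower bound says that the trapezoid rule underestimates the integral of the concave
  function \<open>x^g\<close> over \<open>[a, a+1]\<close>; the upper bound is the tangent-line inequality
  \<open>(a+1)^g - a^g < g a^(g-1)\<close> at \<open>a\<close>. Both follow from the mean value theorem.\<close>

lemma powr_increment_bounds:
  fixes a t g :: real
  assumes "a > 0" and "t > 0" and "0 < g" "g < 1"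
  shows powr_increment_less: "(a + t) powr g - a powr g < g * t * a powr (g - 1)"
    and powr_increment_greater: "g * t * (a + t) powr (g - 1) < (a + t) powr g - a powr g"
proof -
  have "\<exists>z. a < z \<and> z < a + t \<and> (a + t) powr g - a powr g = ((a + t) - a) * (g * z powr (g - 1))"
    using assms by (intro MVT2) (auto intro!: has_real_derivative_powr)
  then obtain z where z: "a < z" "z < a + t" and mvt: "(a + t) powr g - a powr g = t * (g * z powr (g - 1))"
    by auto
  have "z powr (g - 1) < a powr (g - 1)" and "(a + t) powr (g - 1) < z powr (g - 1)"
    using z assms by (auto intro!: powr_less_mono2_neg)
  then show "(a + t) powr g - a powr g < g * t * a powr (g - 1)"
    and "g * t * (a + t) powr (g - 1) < (a + t) powr g - a powr g"
    using mvt assms by (simp_all add: mult_strict_left_mono)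
qed

lemma powr_trapezoid_less_integral:
  fixes a t g :: real
  assumes a: "a > 0" and t: "t > 0" and g: "0 < g" "g < 1"
  shows "(g + 1) * t * ((a + t) powr g + a powr g) < 2 * ((a + t) powr (g + 1) - a powr (g + 1))"
proof -
  define h where "h = (\<lambda>u. 2 * ((a + u) powr (g + 1) - a powr (g + 1)) - (g + 1) * u * ((a + u) powr g + a powr g))"
  define h' where "h' = (\<lambda>u. (g + 1) * ((a + u) powr g - a powr g - g * u * (a + u) powr (g - 1)))"
  have deriv: "(h has_real_derivative h' u) (at u)" if "0 \<le> u" for u
  proof -
    have "(h has_real_derivative
        2 * ((g + 1) * (a + u) powr (g + 1 - 1))
        - (g + 1) * (((a + u) powr g + a powr g) + u * (g * (a + u) powr (g - 1)))) (at u)"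
      unfolding h_def using a that
      by (auto intro!: derivative_eq_intros DERIV_cong[OF has_real_derivative_powr] simp: field_simps)
    then show ?thesis
      unfolding h'_def by (simp add: algebra_simps)
  qed
  have "\<exists>z. 0 < z \<and> z < t \<and> h t - h 0 = (t - 0) * h' z"
    using t by (intro MVT2) (auto intro!: deriv)
  then obtain z where z: "0 < z" "z < t" and mvt: "h t - h 0 = t * h' z" by auto
  have "h' z > 0"
    unfolding h'_def using powr_increment_greater[OF a z(1) g] g by simp
  then have "h t > 0"
    using mvt t by (simp add: h_def)
  then show ?thesis
    by (simp add: h_def)
qed

lemma powr_increment_ratio_bounds:
  fixes a g :: real
  assumes a: "a > 0" and g: "0 < g" "g < 1"
  defines "N \<equiv> (a + 1) powr (g + 1) - a powr (g + 1) - (g + 1) * a powr g"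
    and "D \<equiv> (a + 1) powr g - a powr g"
  shows "1 / 2 < N / ((g + 1) * D) \<and> N / ((g + 1) * D) < 1 / (g + 1)"
proof -
  have "D > 0"
    unfolding D_def using a g by (simp add: powr_less_mono2)
  then have denom_pos: "(g + 1) * D > 0"
    using g by simp
  have "(g + 1) * D < 2 * N"
    using powr_trapezoid_less_integral[OF a _ g, of 1] unfolding N_def D_def by (simp add: algebra_simps)
  moreover have "N < D"
  proof -
    have "a * D < a * (g * a powr (g - 1))"
      using powr_increment_less[OF a _ g, of 1] a unfolding D_def by simp
    also have "\<dots> = g * a powr g"
      using a by (simp add: powr_diff)
    finally show ?thesis
      using a unfolding N_def D_def by (simp add: powr_add algebra_simps)
  qed
  moreover have "N * (g + 1) < D * (g + 1)"
    using \<open>N < D\<close> g by simp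
  ultimately show ?thesis
    using denom_pos g by (simp add: field_simps)
qed

theorem lemma3:
  fixes \<alpha> :: real and s :: nat
  assumes "0 < \<alpha>" and "\<alpha> < 1" and "s \<ge> 1"
  shows "1 / 2 < kappa \<alpha> s \<and> kappa \<alpha> s < 1 / (2 - \<alpha>)"
proof -
  define a where "a = real s - \<alpha> / 2"
  define g where "g = 1 - \<alpha>"
  have "a > 0" "0 < g" "g < 1"
    using assms unfolding a_def g_def by auto
  moreover have "kappa \<alpha> s = ((a + 1) powr (g + 1) - a powr (g + 1) - (g + 1) * a powr g)
      / ((g + 1) * ((a + 1) powr g - a powr g))"
    and "2 - \<alpha> = g + 1"
    unfolding kappa_def a_def g_def by (simp_all add: algebra_simps)
  ultimately show ?thesis
    using powr_increment_ratio_bounds[of a g] by (simp only:)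
qed

end
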